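(* Let $\alpha\ge2$ and $k\ge1$ be integers. Let $x$ be a word of length $n$ chosen uniformly at random from $\{1,\dots,\alpha\}^n$. The expected number of pairs $(i,j)$ with $1\le i\le j\le n$ such that $x[i..j]$ is a $k$-anti-power equals $$\sum_{m=1}^{\lfloor n/k\rfloor}(n+1-km)\prod_{\ell=0}^{k-1}\left(1-\frac{\ell}{\alpha^m}\right),$$ and, for fixed $\alpha$ and $k$, this expectation is $\Theta(n^2)$ as $n\to\infty$.
   Context: $x[i..j]$ denotes the contiguous subword of $x$ from the $i$-th to the $j$-th letter. A $k$-anti-power is a word $w=w_1\cdots w_k$ with $|w_1|=\cdots=|w_k|\ge1$ and $w_1,\dots,w_k$ pairwise distinct. *)

theory Defs
  imports Complex_Main "HOL-Library.Landau_Symbols"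
begin

text \<open>x[i..j]: contiguous subword from the i-th to the j-th letter (1-based, inclusive).\<close>
definition subword :: "'a list \<Rightarrow> nat \<Rightarrow> nat \<Rightarrow> 'a list" where
  "subword x i j = take (Suc j - i) (drop (i - 1) x)"

definition anti_power :: "nat \<Rightarrow> 'a list \<Rightarrow> bool" where
  "anti_power k w \<longleftrightarrow>
     (\<exists>m\<ge>1. length w = k * m \<and> distinct (map (\<lambda>l. take m (drop (l * m) w)) [0..<k]))"

definition words :: "nat \<Rightarrow> nat \<Rightarrow> nat list set" where
  "words \<alpha> n = {x. length x = n \<and> set x \<subseteq> {1..\<alpha>}}"

definition anti_power_count :: "nat \<Rightarrow> nat list \<Rightarrow> nat" where
  "anti_power_count k x =
     card {(i, j). 1 \<le> i \<and> i \<le> j \<and> j \<le> length x \<and> anti_power k (subword x i j)}"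

definition expected_anti_powers :: "nat \<Rightarrow> nat \<Rightarrow> nat \<Rightarrow> real" where
  "expected_anti_powers \<alpha> k n =
     (\<Sum>x\<in>words \<alpha> n. real (anti_power_count k x)) / real (card (words \<alpha> n))"

end

theory Submission
  imports Defs
begin

text \<open>By linearity of expectation, the expected count is the sum over all windows x[i..j] of the
probability that the window is a k-anti-power, and this probability depends only on the window
length L. It vanishes unless L = k m; then the k blocks of the window are independent uniform
words of length m, so it is the probability that k uniform draws from \<alpha>^m values are pairwise
distinct, i.e. \<Prod>l<k. (1 - l / \<alpha>^m), and there are n + 1 - k m such windows.
For the order of growth, each of the at most n summands is at most n + 1. Conversely the product
increases with m and is positive from m = k on, while for k \<le> m \<le> n / (2k) the weight
n + 1 - k m is at least n / 2; about n / (4k) such summands give the quadratic lower bound.\<close>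

lemma words_eq_lists: "words a n = {xs. set xs \<subseteq> {1..a} \<and> length xs = n}"
  by (auto simp: words_def)

lemma finite_words: "finite (words a n)"
  by (simp add: words_eq_lists finite_lists_length_eq)

lemma card_words: "card (words a n) = a ^ n"
  by (simp add: words_eq_lists card_lists_length_eq)

lemma card_words_take_drop:
  "card {x \<in> words a (p + L + q). P (take L (drop p x))} = a ^ (p + q) * card {w \<in> words a L. P w}"
proof -
  let ?W = "{w \<in> words a L. P w}"
  let ?split = "\<lambda>x. (take p x, take L (drop p x), drop (p + L) x)"
  have "bij_betw (\<lambda>(u, w, v). u @ w @ v) (words a p \<times> ?W \<times> words a q)
          {x \<in> words a (p + L + q). P (take L (drop p x))}"
  proof (rule bij_betw_byWitness[where f' = ?split])
    show "\<forall>t\<in>words a p \<times> ?W \<times> words a q. ?split ((\<lambda>(u, w, v). u @ w @ v) t) = t"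
      by (auto simp: words_def)
    show "\<forall>x\<in>{x \<in> words a (p + L + q). P (take L (drop p x))}.
            (\<lambda>(u, w, v). u @ w @ v) (?split x) = x"
      by (simp add: add.commute[of p L] flip: drop_drop)
    show "(\<lambda>(u, w, v). u @ w @ v) ` (words a p \<times> ?W \<times> words a q)
            \<subseteq> {x \<in> words a (p + L + q). P (take L (drop p x))}"
      by (auto simp: words_def subset_iff)
    show "?split ` {x \<in> words a (p + L + q). P (take L (drop p x))} \<subseteq> words a p \<times> ?W \<times> words a q"
      by (auto simp: words_def dest: in_set_takeD in_set_dropD)
  qed
  then show ?thesis
    by (simp add: bij_betw_same_card[symmetric] card_cartesian_product card_words power_add)
qed

definition subword_positions :: "nat \<Rightarrow> (nat \<times> nat) set" where
  "subword_positions n = {(i, j). 1 \<le> i \<and> i \<le> j \<and> j \<le> n}"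

lemma finite_subword_positions: "finite (subword_positions n)"
  by (rule finite_subset[of _ "{1..n} \<times> {1..n}"]) (auto simp: subword_positions_def)

lemma card_words_subword:
  assumes "(i, j) \<in> subword_positions n"
  shows "card {x \<in> words a n. P (subword x i j)} =
           a ^ (n - (j + 1 - i)) * card {w \<in> words a (j + 1 - i). P w}"
proof -
  have n: "n = (i - 1) + (j + 1 - i) + (n - j)" and e: "(i - 1) + (n - j) = n - (j + 1 - i)"
    using assms by (auto simp: subword_positions_def)
  have "card {x \<in> words a n. P (subword x i j)} =
        card {x \<in> words a ((i - 1) + (j + 1 - i) + (n - j)). P (take (j + 1 - i) (drop (i - 1) x))}"
    by (subst n[symmetric]) (simp add: subword_def)
  also have "\<dots> = a ^ (n - (j + 1 - i)) * card {w \<in> words a (j + 1 - i). P w}"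
    by (simp only: card_words_take_drop e)
  finally show ?thesis .
qed

lemma card_filter_eq_sum_of_bool:
  "finite A \<Longrightarrow> real (card {x \<in> A. P x}) = (\<Sum>x\<in>A. of_bool (P x))"
  by (simp add: Collect_conj_eq Int_commute)

lemma sum_anti_power_count:
  "(\<Sum>x\<in>words a n. real (anti_power_count k x)) =
     (\<Sum>(i, j)\<in>subword_positions n. real (card {x \<in> words a n. anti_power k (subword x i j)}))"
proof -
  have count: "real (anti_power_count k x) =
      (\<Sum>(i, j)\<in>subword_positions n. of_bool (anti_power k (subword x i j)))"
    if "x \<in> words a n" for x
  proof -
    have "{(i, j). 1 \<le> i \<and> i \<le> j \<and> j \<le> length x \<and> anti_power k (subword x i j)} =
          {p \<in> subword_positions n. anti_power k (subword x (fst p) (snd p))}"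
      using that by (auto simp: subword_positions_def words_def)
    then show ?thesis
      by (simp add: anti_power_count_def card_filter_eq_sum_of_bool finite_subword_positions
          case_prod_unfold)
  qed
  have "(\<Sum>x\<in>words a n. real (anti_power_count k x)) =
      (\<Sum>x\<in>words a n. \<Sum>(i, j)\<in>subword_positions n. of_bool (anti_power k (subword x i j)))"
    by (simp add: count)
  also have "\<dots> = (\<Sum>(i, j)\<in>subword_positions n. \<Sum>x\<in>words a n. of_bool (anti_power k (subword x i j)))"
    by (subst sum.swap) (simp add: case_prod_unfold)
  also have "\<dots> = (\<Sum>(i, j)\<in>subword_positions n. real (card {x \<in> words a n. anti_power k (subword x i j)}))"
    by (simp add: card_filter_eq_sum_of_bool finite_words case_prod_unfold)
  finally show ?thesis .
qed

definition blocks :: "nat \<Rightarrow> nat \<Rightarrow> 'a list \<Rightarrow> 'a list list" where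
  "blocks k m w = map (\<lambda>l. take m (drop (l * m) w)) [0..<k]"

lemma length_blocks [simp]: "length (blocks k m w) = k"
  by (simp add: blocks_def)

lemma concat_blocks_eq_take: "concat (blocks k m w) = take (k * m) w"
proof (induction k)
  case 0
  then show ?case by (simp add: blocks_def)
next
  case (Suc k)
  have "concat (blocks (Suc k) m w) = take (k * m) w @ take m (drop (k * m) w)"
    using Suc by (simp add: blocks_def)
  also have "\<dots> = take (k * m + m) w"
    by (simp only: take_add)
  finally show ?case
    by (simp add: add.commute)
qed

lemma blocks_concat:
  assumes "\<forall>b\<in>set bs. length b = m"
  shows "blocks (length bs) m (concat bs) = bs"
  using assms
proof (induction bs)
  case Nil
  then show ?case by (simp add: blocks_def)
next
  case (Cons b bs)
  have "blocks (length (b # bs)) m (concat (b # bs)) =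
      take m (b @ concat bs) # map (\<lambda>l. take m (drop (Suc l * m) (b @ concat bs))) [0..<length bs]"
    unfolding blocks_def
    by (simp only: length_Cons upt_conv_Cons[of 0] map_Suc_upt[symmetric]) (simp add: o_def)
  also have "\<dots> = b # blocks (length bs) m (concat bs)"
    using Cons.prems by (simp add: blocks_def add.commute)
  finally show ?case
    using Cons by simp
qed

lemma set_blocks_subset_words:
  assumes "w \<in> words a (k * m)"
  shows "set (blocks k m w) \<subseteq> words a m"
proof
  fix b assume "b \<in> set (blocks k m w)"
  then obtain l where l: "l < k" "b = take m (drop (l * m) w)"
    by (auto simp: blocks_def)
  have "(l + 1) * m \<le> k * m"
    using l by (intro mult_right_mono) auto
  then show "b \<in> words a m"
    using l assms by (auto simp: words_def dest: in_set_takeD in_set_dropD)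
qed

lemma anti_power_iff_distinct_blocks:
  assumes "k \<ge> 1" "length w = k * m"
  shows "anti_power k w \<longleftrightarrow> m \<ge> 1 \<and> distinct (blocks k m w)"
proof -
  have "length w = k * m' \<longleftrightarrow> m' = m" for m'
    using assms by auto
  then show ?thesis
    unfolding anti_power_def blocks_def by auto
qed

lemma bij_betw_blocks_anti_powers:
  assumes "k \<ge> 1" "m \<ge> 1"
  shows "bij_betw (blocks k m) {w \<in> words a (k * m). anti_power k w}
           {bs. length bs = k \<and> distinct bs \<and> set bs \<subseteq> words a m}"
proof (rule bij_betw_byWitness[where f' = concat])
  show "\<forall>w\<in>{w \<in> words a (k * m). anti_power k w}. concat (blocks k m w) = w"
    by (auto simp: words_def concat_blocks_eq_take)
  have equal_lengths: "\<forall>b\<in>set bs. length b = m" if "set bs \<subseteq> words a m" for bs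
    using that by (auto simp: words_def)
  then show "\<forall>bs\<in>{bs. length bs = k \<and> distinct bs \<and> set bs \<subseteq> words a m}.
      blocks k m (concat bs) = bs"
    using blocks_concat by blast
  show "blocks k m ` {w \<in> words a (k * m). anti_power k w}
          \<subseteq> {bs. length bs = k \<and> distinct bs \<and> set bs \<subseteq> words a m}"
  proof (rule image_subsetI, clarify)
    fix w assume "w \<in> words a (k * m)" "anti_power k w"
    then show "length (blocks k m w) = k \<and> distinct (blocks k m w) \<and> set (blocks k m w) \<subseteq> words a m"
      using assms set_blocks_subset_words
      by (auto simp: words_def[of a "k * m"] anti_power_iff_distinct_blocks)
  qed
  show "concat ` {bs. length bs = k \<and> distinct bs \<and> set bs \<subseteq> words a m}
          \<subseteq> {w \<in> words a (k * m). anti_power k w}"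
  proof (rule image_subsetI)
    fix bs :: "nat list list"
    assume "bs \<in> {bs. length bs = k \<and> distinct bs \<and> set bs \<subseteq> words a m}"
    then have bs: "length bs = k" "distinct bs" "set bs \<subseteq> words a m"
      by auto
    then have length_concat: "length (concat bs) = k * m"
      using equal_lengths[OF bs(3)] by (simp add: length_concat sum_list_triv cong: map_cong)
    have "concat bs \<in> words a (k * m)"
      using bs length_concat by (auto simp: words_def)
    moreover have "anti_power k (concat bs)"
      using bs assms blocks_concat[OF equal_lengths[OF bs(3)]]
      by (simp add: anti_power_iff_distinct_blocks[OF assms(1) length_concat])
    ultimately show "concat bs \<in> {w \<in> words a (k * m). anti_power k w}"
      by simp
  qed
qed

lemma card_distinct_lists:
  assumes "finite A"
  shows "card {xs. length xs = k \<and> distinct xs \<and> set xs \<subseteq> A} = (\<Prod>l<k. card A - l)"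
proof (cases "k \<le> card A")
  case True
  have "\<Prod>{card A - k + 1 .. card A} = (\<Prod>l<k. card A - l)"
    using True
  proof (induction k)
    case (Suc k)
    have "{card A - Suc k + 1 .. card A} = insert (card A - k) {card A - k + 1 .. card A}"
      using Suc.prems by auto
    then show ?case
      using Suc by (simp add: mult.commute)
  qed simp
  with card_lists_distinct_length_eq[OF assms True] show ?thesis
    by simp
next
  case False
  have "length xs \<le> card A" if "distinct xs" "set xs \<subseteq> A" for xs :: "'a list"
    by (metis that distinct_card card_mono[OF assms])
  then have "{xs. length xs = k \<and> distinct xs \<and> set xs \<subseteq> A} = {}"
    using False by auto
  moreover have "(\<Prod>l<k. card A - l) = 0"
    using False by (intro prod_zero) (auto intro!: bexI[of _ "card A"])
  ultimately show ?thesis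
    by (simp only: card.empty)
qed

lemma of_nat_falling_prod_div_power:
  assumes "N > 0"
  shows "real (\<Prod>l<k. N - l) / real N ^ k = (\<Prod>l<k. 1 - real l / real N)"
proof (cases "k \<le> N")
  case True
  have "(\<Prod>l<k. 1 - real l / real N) = (\<Prod>l<k. (real N - real l) / real N)"
    using assms by (intro prod.cong) (auto simp: field_simps)
  also have "\<dots> = real (\<Prod>l<k. N - l) / real N ^ k"
    using True by (simp add: prod_dividef)
  finally show ?thesis ..
next
  case False
  then have "N \<in> {..<k}"
    by simp
  then have "(\<Prod>l<k. N - l) = 0" and "(\<Prod>l<k. 1 - real l / real N) = 0"
    using assms by (auto intro!: prod_zero bexI[of _ N])
  then show ?thesis
    by (simp only: of_nat_0 div_0)
qed

definition anti_power_density :: "nat \<Rightarrow> nat \<Rightarrow> nat \<Rightarrow> real" where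
  "anti_power_density a k L = real (card {w \<in> words a L. anti_power k w}) / real a ^ L"

lemma anti_power_density_nonneg: "anti_power_density a k L \<ge> 0"
  by (simp add: anti_power_density_def)

lemma anti_power_density_le_1:
  assumes "a > 0"
  shows "anti_power_density a k L \<le> 1"
proof -
  have "card {w \<in> words a L. anti_power k w} \<le> a ^ L"
    using card_mono[OF finite_words, of "{w \<in> words a L. anti_power k w}"] card_words by auto
  then have "real (card {w \<in> words a L. anti_power k w}) \<le> real a ^ L"
    by (metis of_nat_le_iff of_nat_power)
  then show ?thesis
    using assms by (simp add: anti_power_density_def divide_le_eq_1)
qed

lemma anti_power_density_eq_0:
  assumes "\<not> k dvd L"
  shows "anti_power_density a k L = 0"
proof -
  have "{w \<in> words a L. anti_power k w} = {}"
    using assms by (auto simp: words_def anti_power_def)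
  then show ?thesis
    by (simp only: anti_power_density_def card.empty of_nat_0 div_0)
qed

lemma anti_power_density_blocks:
  assumes "k \<ge> 1" "m \<ge> 1" "a > 0"
  shows "anti_power_density a k (k * m) = (\<Prod>l<k. 1 - real l / real a ^ m)"
proof -
  have "card {w \<in> words a (k * m). anti_power k w} = (\<Prod>l<k. a ^ m - l)"
    using bij_betw_same_card[OF bij_betw_blocks_anti_powers[OF assms(1,2)]]
    by (simp add: card_distinct_lists finite_words card_words)
  moreover have "real a ^ (k * m) = real (a ^ m) ^ k"
    by (simp add: power_mult[symmetric] mult.commute)
  ultimately show ?thesis
    using of_nat_falling_prod_div_power[of "a ^ m" k] assms(3)
    by (simp add: anti_power_density_def)
qed

lemma expected_anti_powers_eq_sum_density:
  assumes "a > 0"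
  shows "expected_anti_powers a k n =
           (\<Sum>(i, j)\<in>subword_positions n. anti_power_density a k (j + 1 - i))"
proof -
  have "real (card {x \<in> words a n. anti_power k (subword x i j)}) / real a ^ n =
          anti_power_density a k (j + 1 - i)"
    if "(i, j) \<in> subword_positions n" for i j
  proof -
    have "real a ^ n = real a ^ (n - (j + 1 - i)) * real a ^ (j + 1 - i)"
      using that by (simp add: subword_positions_def flip: power_add)
    then show ?thesis
      using assms by (simp add: card_words_subword[OF that] anti_power_density_def)
  qed
  then show ?thesis
    unfolding expected_anti_powers_def sum_anti_power_count card_words sum_divide_distrib
    by (intro sum.cong) auto
qed

lemma card_subword_positions_of_length:
  assumes "1 \<le> L" "L \<le> n"
  shows "card {(i, j) \<in> subword_positions n. j + 1 - i = L} = n + 1 - L"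
proof -
  have "{(i, j) \<in> subword_positions n. j + 1 - i = L} = (\<lambda>i. (i, i + L - 1)) ` {1..n + 1 - L}"
    using assms by (auto simp: subword_positions_def image_iff)
  moreover have "inj_on (\<lambda>i. (i, i + L - 1)) {1..n + 1 - L}"
    by (auto simp: inj_on_def)
  ultimately show ?thesis
    by (simp add: card_image)
qed

lemma sum_subword_positions_by_length:
  fixes f :: "nat \<Rightarrow> 'a::semiring_1"
  shows "(\<Sum>(i, j)\<in>subword_positions n. f (j + 1 - i)) = (\<Sum>L=1..n. of_nat (n + 1 - L) * f L)"
proof -
  have "(\<Sum>(i, j)\<in>subword_positions n. f (j + 1 - i)) =
      (\<Sum>L=1..n. \<Sum>(i, j)\<in>{(i, j) \<in> subword_positions n. j + 1 - i = L}. f (j + 1 - i))"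
    by (subst sum.group[OF finite_subword_positions finite_atLeastAtMost, of "\<lambda>(i, j). j + 1 - i",
          symmetric]) (auto simp: subword_positions_def case_prod_unfold)
  also have "\<dots> = (\<Sum>L=1..n. of_nat (n + 1 - L) * f L)"
  proof (intro sum.cong refl)
    fix L assume "L \<in> {1..n}"
    then have "(\<Sum>(i, j)\<in>{(i, j) \<in> subword_positions n. j + 1 - i = L}. f (j + 1 - i)) =
        (\<Sum>_\<in>{(i, j) \<in> subword_positions n. j + 1 - i = L}. f L)"
      by (intro sum.cong) auto
    also have "\<dots> = of_nat (n + 1 - L) * f L"
      using \<open>L \<in> {1..n}\<close> card_subword_positions_of_length[of L n] by simp
    finally show "(\<Sum>(i, j)\<in>{(i, j) \<in> subword_positions n. j + 1 - i = L}. f (j + 1 - i)) =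
        of_nat (n + 1 - L) * f L" .
  qed
  finally show ?thesis .
qed

lemma sum_atLeastAtMost_multiples:
  fixes f :: "nat \<Rightarrow> 'a::comm_monoid_add"
  assumes "k > 0" and "\<And>L. \<not> k dvd L \<Longrightarrow> f L = 0"
  shows "(\<Sum>L=1..n. f L) = (\<Sum>m=1..n div k. f (k * m))"
proof -
  have "(\<Sum>L=1..n. f L) = sum f ({1..n} \<inter> {L. k dvd L})"
    using assms(2) by (intro sum.mono_neutral_right) auto
  also have "{1..n} \<inter> {L. k dvd L} = (\<lambda>m. k * m) ` {1..n div k}"
    using assms(1) by (auto simp: less_eq_div_iff_mult_less_eq mult.commute)
  also have "sum f \<dots> = (\<Sum>m=1..n div k. f (k * m))"
    using assms(1) by (simp add: sum.reindex inj_on_def)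
  finally show ?thesis .
qed

lemma expected_anti_powers_formula:
  assumes "a > 0" "k \<ge> 1"
  shows "expected_anti_powers a k n =
           (\<Sum>m=1..n div k. real (n + 1 - k * m) * (\<Prod>l<k. 1 - real l / real a ^ m))"
proof -
  have "expected_anti_powers a k n = (\<Sum>L=1..n. real (n + 1 - L) * anti_power_density a k L)"
    unfolding expected_anti_powers_eq_sum_density[OF assms(1)] by (rule sum_subword_positions_by_length)
  also have "\<dots> = (\<Sum>m=1..n div k. real (n + 1 - k * m) * anti_power_density a k (k * m))"
    using assms(2) by (intro sum_atLeastAtMost_multiples) (auto simp: anti_power_density_eq_0)
  also have "\<dots> = (\<Sum>m=1..n div k. real (n + 1 - k * m) * (\<Prod>l<k. 1 - real l / real a ^ m))"
    using assms by (intro sum.cong) (auto simp: anti_power_density_blocks)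
  finally show ?thesis .
qed

lemma prod_one_minus_div_pos:
  fixes x :: real
  assumes "real k \<le> x"
  shows "(\<Prod>l<k. 1 - real l / x) > 0"
proof (rule prod_pos)
  fix l assume "l \<in> {..<k}"
  then have "real l < x"
    using assms by simp
  then show "1 - real l / x > 0"
    by (cases "l = 0") (auto simp: field_simps)
qed

lemma prod_one_minus_div_mono:
  fixes x y :: real
  assumes "real k \<le> x" "x \<le> y"
  shows "(\<Prod>l<k. 1 - real l / x) \<le> (\<Prod>l<k. 1 - real l / y)"
proof (rule prod_mono)
  fix l assume "l \<in> {..<k}"
  then have "real l < x"
    using assms by simp
  then have "real l / y \<le> real l / x" and "real l / x < 1"
    using assms by (auto intro: divide_left_mono)
  then show "0 \<le> 1 - real l / x \<and> 1 - real l / x \<le> 1 - real l / y"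
    by simp
qed

lemma weighted_sum_upper_bound:
  fixes P :: "nat \<Rightarrow> real"
  assumes "\<And>m. m \<ge> 1 \<Longrightarrow> 0 \<le> P m" "\<And>m. m \<ge> 1 \<Longrightarrow> P m \<le> 1"
  shows "(\<Sum>m=1..n div k. real (n + 1 - k * m) * P m) \<le> real n * real (n + 1)"
proof -
  have "(\<Sum>m=1..n div k. real (n + 1 - k * m) * P m) \<le> (\<Sum>m=1..n div k. real (n + 1) * 1)"
    using assms by (intro sum_mono mult_mono) auto
  also have "\<dots> \<le> real n * real (n + 1)"
    by (simp add: mult_right_mono)
  finally show ?thesis .
qed

lemma weighted_sum_lower_bound:
  fixes P :: "nat \<Rightarrow> real"
  assumes "k \<ge> 1" "4 * k ^ 2 \<le> n" "c \<ge> 0"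
    and "\<And>m. m \<ge> 1 \<Longrightarrow> 0 \<le> P m" "\<And>m. m \<ge> k \<Longrightarrow> c \<le> P m"
  shows "c / (8 * k) * real n ^ 2 \<le> (\<Sum>m=1..n div k. real (n + 1 - k * m) * P m)"
proof -
  define M where "M = n div (2 * k)"
  have M_le: "2 * k * M \<le> n"
    unfolding M_def by (rule times_div_less_eq_dividend)
  have M_gt: "n < 2 * k * (M + 1)"
    using assms(1) div_less_iff_less_mult[of "2 * k" n "M + 1"] by (simp add: M_def mult.commute)
  have "(2 * k) * (2 * k) < (2 * k) * (M + 1)"
    using assms(2) M_gt by (simp add: power2_eq_square mult.assoc mult.left_commute)
  then have "2 * k < M + 1"
    using mult_less_cancel1 by blast
  then have "k \<le> M"
    by simp
  have "M * k \<le> n"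
    using M_le le_trans[of "M * k" "2 * k * M" n] by simp
  then have "{k..M} \<subseteq> {1..n div k}"
    using assms(1) by (auto simp: less_eq_div_iff_mult_less_eq)
  then have "(\<Sum>m\<in>{k..M}. real (n + 1 - k * m) * P m) \<le> (\<Sum>m=1..n div k. real (n + 1 - k * m) * P m)"
    using assms(4) by (intro sum_mono2) auto
  moreover have "real n / 2 * c \<le> real (n + 1 - k * m) * P m" if "m \<in> {k..M}" for m
  proof -
    have "2 * (k * m) \<le> n"
      using that M_le le_trans[of "2 * (k * m)" "2 * k * M" n] by simp
    then have "real n / 2 \<le> real (n + 1 - k * m)"
      by (simp add: field_simps flip: of_nat_mult)
    then show ?thesis
      using that assms(3,5) by (intro mult_mono) auto
  qed
  then have "real (card {k..M}) * (real n / 2 * c) \<le> (\<Sum>m\<in>{k..M}. real (n + 1 - k * m) * P m)"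
    using sum_mono[of "{k..M}" "\<lambda>_. real n / 2 * c"] by simp
  moreover have "real n / (4 * k) \<le> real (card {k..M})"
  proof -
    have "real n < 2 * real k * (real M + 1)" and "4 * real k ^ 2 \<le> real n"
      using of_nat_less_iff[where 'a = real, THEN iffD2, OF M_gt]
        of_nat_le_iff[where 'a = real, THEN iffD2, OF assms(2)]
      by (simp_all add: algebra_simps)
    then have "real n / (2 * k) < real M + 1" and "real k \<le> real n / (4 * k)"
      using assms(1) by (simp_all add: field_simps power2_eq_square)
    then show ?thesis
      using \<open>k \<le> M\<close> by (simp add: field_simps)
  qed
  then have "real n / (4 * k) * (real n / 2 * c) \<le> real (card {k..M}) * (real n / 2 * c)"
    using assms(3) by (intro mult_right_mono) auto
  moreover have "real n / (4 * k) * (real n / 2 * c) = c / (8 * k) * real n ^ 2"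
    by (simp add: power2_eq_square field_simps)
  ultimately show ?thesis
    by linarith
qed

lemma weighted_sum_bigtheta:
  fixes P :: "nat \<Rightarrow> real"
  assumes "k \<ge> 1" "c > 0"
    and "\<And>m. m \<ge> 1 \<Longrightarrow> 0 \<le> P m" "\<And>m. m \<ge> 1 \<Longrightarrow> P m \<le> 1" "\<And>m. m \<ge> k \<Longrightarrow> c \<le> P m"
  shows "(\<lambda>n. \<Sum>m=1..n div k. real (n + 1 - k * m) * P m) \<in> \<Theta>(\<lambda>n. real n ^ 2)"
proof (rule bigthetaI'[of "c / (8 * k)" 2])
  show "c / (8 * k) > 0" "(2::real) > 0"
    using assms(1,2) by simp_all
  show "\<forall>\<^sub>F n in at_top.
      c / (8 * k) * norm (real n ^ 2) \<le> norm (\<Sum>m=1..n div k. real (n + 1 - k * m) * P m) \<and>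
      norm (\<Sum>m=1..n div k. real (n + 1 - k * m) * P m) \<le> 2 * norm (real n ^ 2)"
    using eventually_ge_at_top[of "4 * k ^ 2"]
  proof eventually_elim
    case (elim n)
    have "1 \<le> n"
      using elim one_le_power[OF assms(1), of 2] by linarith
    then have "real n * real (n + 1) \<le> 2 * real n ^ 2"
      by (simp add: power2_eq_square algebra_simps)
    moreover have "0 \<le> (\<Sum>m=1..n div k. real (n + 1 - k * m) * P m)"
      using assms(3) by (intro sum_nonneg) auto
    moreover have "(\<Sum>m=1..n div k. real (n + 1 - k * m) * P m) \<le> real n * real (n + 1)"
      by (rule weighted_sum_upper_bound) (use assms in auto)
    moreover have "c / (8 * k) * real n ^ 2 \<le> (\<Sum>m=1..n div k. real (n + 1 - k * m) * P m)"
      by (rule weighted_sum_lower_bound) (use assms elim in auto)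
    ultimately show ?case
      by simp
  qed
qed

theorem corollary6p3:
  fixes \<alpha> k :: nat
  assumes "\<alpha> \<ge> 2" and "k \<ge> 1"
  shows "(\<forall>n. expected_anti_powers \<alpha> k n =
            (\<Sum>m=1..n div k. real (n + 1 - k * m) *
               (\<Prod>l<k. (1 - real l / real \<alpha> ^ m))))
         \<and> (\<lambda>n. expected_anti_powers \<alpha> k n) \<in> \<Theta>(\<lambda>n. real n ^ 2)"
proof -
  define P where "P m = (\<Prod>l<k. 1 - real l / real \<alpha> ^ m)" for m
  have \<alpha>: "\<alpha> > 0"
    using assms(1) by simp
  have formula: "expected_anti_powers \<alpha> k n = (\<Sum>m=1..n div k. real (n + 1 - k * m) * P m)" for n
    unfolding P_def by (rule expected_anti_powers_formula[OF \<alpha> assms(2)])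
  have P_density: "P m = anti_power_density \<alpha> k (k * m)" if "m \<ge> 1" for m
    unfolding P_def using anti_power_density_blocks[OF assms(2) that \<alpha>] by simp
  have k_le: "real k \<le> real \<alpha> ^ k"
    using self_le_ge2_pow[OF assms(1), of k] by (metis of_nat_le_iff of_nat_power)
  have "P k > 0"
    unfolding P_def using k_le by (rule prod_one_minus_div_pos)
  moreover have "P k \<le> P m" if "m \<ge> k" for m
    unfolding P_def using k_le
  proof (rule prod_one_minus_div_mono)
    show "real \<alpha> ^ k \<le> real \<alpha> ^ m"
      using assms(1) that by (intro power_increasing) auto
  qed
  ultimately have "(\<lambda>n. \<Sum>m=1..n div k. real (n + 1 - k * m) * P m) \<in> \<Theta>(\<lambda>n. real n ^ 2)"
    using P_density anti_power_density_nonneg anti_power_density_le_1[OF \<alpha>]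
    by (intro weighted_sum_bigtheta[OF assms(2), of "P k"]) auto
  then show ?thesis
    using formula unfolding P_def by simp
qed

end
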